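(* Let $d\ge 2$, let $\rho$ be a density operator on $\mathbb{C}^d$, and let $\{|i_m\rangle\}_{i=1}^d$, $m=1,\dots,M$, be $M$ mutually unbiased orthonormal bases of $\mathbb{C}^d$, with $p_{i_m}=\langle i_m|\rho|i_m\rangle$. Let $K=\left\lfloor\frac{Md}{d+M-1}\right\rfloor$ and $a=\frac{Md}{d+M-1}-K$. Then $$\sum_{m=1}^M H\{p_{i_m};i\}\ge\big(a(K+1)\log_2(K+1)+(1-a)K\log_2K\big)\frac{d+M-1}{d},$$ and the right-hand side equals $$M\log_2K+(K+1)\Big(M-K\frac{d+M-1}{d}\Big)\log_2\Big(1+\frac1K\Big).$$
   Context: Orthonormal bases $\{|i_m\rangle\}_{i=1}^d$, $m=1,\dots,M$, of $\mathbb{C}^d$ are mutually unbiased if $|\langle i_m|j_n\rangle|^2=1/d$ for all $i,j$ and all $m\ne n$. $H\{p_{i_m};i\}=-\sum_{i=1}^d p_{i_m}\log_2 p_{i_m}$ (with $0\log_2 0=0$) is the Shannon entropy of the outcome distribution in the $m$th basis. *)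

theory Defs
  imports Complex_Main
begin

text \<open>Vectors of C^d are functions nat => complex (only indices k < d matter);
  operators on C^d are functions nat => nat => complex (entries (k,l), k,l < d).\<close>

definition cinner :: "nat \<Rightarrow> (nat \<Rightarrow> complex) \<Rightarrow> (nat \<Rightarrow> complex) \<Rightarrow> complex" where
  "cinner d u v = (\<Sum>k<d. cnj (u k) * v k)"

definition op_apply :: "nat \<Rightarrow> (nat \<Rightarrow> nat \<Rightarrow> complex) \<Rightarrow> (nat \<Rightarrow> complex) \<Rightarrow> (nat \<Rightarrow> complex)" where
  "op_apply d A v = (\<lambda>k. \<Sum>l<d. A k l * v l)"

definition density_operator :: "nat \<Rightarrow> (nat \<Rightarrow> nat \<Rightarrow> complex) \<Rightarrow> bool" where
  "density_operator d \<rho> \<longleftrightarrow>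
     (\<forall>k<d. \<forall>l<d. \<rho> l k = cnj (\<rho> k l)) \<and>
     (\<forall>v. 0 \<le> Re (cinner d v (op_apply d \<rho> v))) \<and>
     (\<Sum>k<d. \<rho> k k) = 1"

text \<open>d orthonormal vectors b 0, ..., b (d-1) of C^d (automatically a basis).\<close>
definition orthonormal_basis :: "nat \<Rightarrow> (nat \<Rightarrow> nat \<Rightarrow> complex) \<Rightarrow> bool" where
  "orthonormal_basis d b \<longleftrightarrow>
     (\<forall>i<d. \<forall>j<d. cinner d (b i) (b j) = (if i = j then 1 else 0))"

text \<open>B m i is the i-th vector of the m-th basis (m < M, i < d).\<close>
definition mutually_unbiased :: "nat \<Rightarrow> nat \<Rightarrow> (nat \<Rightarrow> nat \<Rightarrow> nat \<Rightarrow> complex) \<Rightarrow> bool" where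
  "mutually_unbiased d M B \<longleftrightarrow>
     (\<forall>m<M. orthonormal_basis d (B m)) \<and>
     (\<forall>m<M. \<forall>n<M. m \<noteq> n \<longrightarrow>
        (\<forall>i<d. \<forall>j<d. (cmod (cinner d (B m i) (B n j)))\<^sup>2 = 1 / real d))"

definition shannon_entropy :: "nat \<Rightarrow> (nat \<Rightarrow> real) \<Rightarrow> real" where
  "shannon_entropy d p = - (\<Sum>i<d. if p i = 0 then 0 else p i * log 2 (p i))"

end

theory Submission
  imports Defs "HOL-Analysis.Analysis" "Jordan_Normal_Form.Determinant"
begin

text \<open>For every \<open>K \<ge> 1\<close>, the entropy (in nats) of a
  probability vector is at least \<open>\<alpha>\<^sub>K + \<beta>\<^sub>K \<Sum>\<^sub>i p\<^sub>i\<^sup>2\<close>, where the line \<open>\<alpha>\<^sub>K + \<beta>\<^sub>K c\<close> passes through the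
  points \<open>(1 / K, ln K)\<close> and \<open>(1 / (K + 1), ln (K + 1))\<close> of the uniform distributions on \<open>K\<close> and
  \<open>K + 1\<close> points. And the collision probabilities of \<open>M\<close> mutually unbiased bases satisfy
  \<open>\<Sum>\<^sub>m \<Sum>\<^sub>i p\<^sub>i\<^sub>m\<^sup>2 \<le> (d + M - 1) / d\<close>: this is Bessel's inequality for the operators
  \<open>|i\<^sub>m\<rangle>\<langle>i\<^sub>m| - I / d\<close> in the Hilbert-Schmidt inner product, together with \<open>tr \<rho>\<^sup>2 \<le> 1\<close>.
  Since \<open>\<beta>\<^sub>K < 0\<close>, the two give the bound; the choice \<open>K = \<lfloor>M d / (d + M - 1)\<rfloor>\<close> makes it
  tightest, and the stated right-hand side is just this bound rewritten.\<close>

section \<open>Entropy and collision probability\<close>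

lemma ln_succ_diff_bounds:
  fixes x :: real
  assumes "0 < x"
  shows "1 / (x + 1) < ln (x + 1) - ln x" and "ln (x + 1) - ln x < 1 / x"
proof -
  have "ln (x / (x + 1)) < x / (x + 1) - 1"
    using assms ln_le_minus_one[of "x / (x + 1)"] ln_eq_minus_one[of "x / (x + 1)"] by force
  then show "1 / (x + 1) < ln (x + 1) - ln x"
    using assms by (simp add: ln_div field_simps)
  have "ln (1 + 1 / x) < 1 / x"
    using assms by (intro ln_add_one_self_less_self) auto
  moreover have "1 + 1 / x = (x + 1) / x" using assms by (simp add: field_simps)
  ultimately show "ln (x + 1) - ln x < 1 / x"
    using assms by (simp add: ln_div)
qed

text \<open>\<open>chord_intercept K + chord_slope K * c\<close> is the line \<open>\<alpha>\<^sub>K + \<beta>\<^sub>K c\<close>; summing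
  \<open>chord_defect K\<close> over a probability vector gives the excess of its entropy over that line at
  \<open>c = \<Sum>\<^sub>i p\<^sub>i\<^sup>2\<close>.\<close>

definition chord_slope :: "nat \<Rightarrow> real" where
  "chord_slope K = - real K * (real K + 1) * (ln (real K + 1) - ln (real K))"

definition chord_intercept :: "nat \<Rightarrow> real" where
  "chord_intercept K = (real K + 1) * ln (real K + 1) - real K * ln (real K)"

definition chord_defect :: "nat \<Rightarrow> real \<Rightarrow> real" where
  "chord_defect K x = - x * ln x - chord_intercept K * x - chord_slope K * x\<^sup>2"

definition chord_defect' :: "nat \<Rightarrow> real \<Rightarrow> real" where
  "chord_defect' K x = - ln x - 1 - chord_intercept K - 2 * chord_slope K * x"

definition defect_inflection :: "nat \<Rightarrow> real" where
  "defect_inflection K = - 1 / (2 * chord_slope K)"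

lemma chord_defect_has_derivative:
  "0 < x \<Longrightarrow> (chord_defect K has_real_derivative chord_defect' K x) (at x)"
  unfolding chord_defect_def[abs_def] chord_defect'_def
  by (rule derivative_eq_intros refl | simp)+

context
  fixes K :: nat
  assumes K_pos: "K \<ge> 1"
begin

lemma chord_slope_bounds:
  "real K < - chord_slope K" "- chord_slope K < real K + 1" "real K + 1 < - 2 * chord_slope K"
proof -
  have K: "real K > 0" using K_pos by simp
  note L = ln_succ_diff_bounds[OF K]
  have "- chord_slope K = real K * (real K + 1) * (ln (real K + 1) - ln (real K))"
    unfolding chord_slope_def by simp
  moreover have "real K * (real K + 1) * (1 / (real K + 1))
      < real K * (real K + 1) * (ln (real K + 1) - ln (real K))"
    using K L(1) by (intro mult_strict_left_mono) auto
  moreover have "real K * (real K + 1) * (ln (real K + 1) - ln (real K))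
      < real K * (real K + 1) * (1 / real K)"
    using K L(2) by (intro mult_strict_left_mono) auto
  ultimately show "real K < - chord_slope K" "- chord_slope K < real K + 1"
    using K by simp_all
  have "real K + 1 \<le> 2 * real K" using K_pos by simp
  then show "real K + 1 < - 2 * chord_slope K"
    using \<open>real K < - chord_slope K\<close> by linarith
qed

lemma chord_slope_neg: "chord_slope K < 0"
  using chord_slope_bounds(1) K_pos by simp

lemma defect_inflection_bounds: "0 < defect_inflection K" "defect_inflection K < 1 / (real K + 1)"
  unfolding defect_inflection_def using chord_slope_neg chord_slope_bounds(3)
  by (auto simp: field_simps)

lemma chord_defect_uniform:
  "chord_defect K (1 / real K) = 0" "chord_defect K (1 / (real K + 1)) = 0"
  using K_pos unfolding chord_defect_def chord_intercept_def chord_slope_def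
  by (simp_all add: ln_div field_simps power2_eq_square)

lemma chord_defect'_uniform:
  "chord_defect' K (1 / real K) > 0" "chord_defect' K (1 / (real K + 1)) < 0"
proof -
  have K: "real K > 0" using K_pos by simp
  have "chord_defect' K (1 / real K) = (real K + 1) * (ln (real K + 1) - ln (real K)) - 1"
    "chord_defect' K (1 / (real K + 1)) = real K * (ln (real K + 1) - ln (real K)) - 1"
    using K unfolding chord_defect'_def chord_intercept_def chord_slope_def
    by (simp_all add: ln_div field_simps power2_eq_square)
  then show "chord_defect' K (1 / real K) > 0" "chord_defect' K (1 / (real K + 1)) < 0"
    using ln_succ_diff_bounds[OF K] K by (simp_all add: field_simps)
qed

lemma chord_defect_convex: "convex_on {defect_inflection K..} (chord_defect K)"
proof (rule f''_ge0_imp_convex)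
  fix x assume "x \<in> {defect_inflection K..}"
  then have x: "defect_inflection K \<le> x" "0 < x" using defect_inflection_bounds(1) by auto
  show "(chord_defect K has_real_derivative chord_defect' K x) (at x)"
    using chord_defect_has_derivative x(2) .
  show "(chord_defect' K has_real_derivative (- 1 / x - 2 * chord_slope K)) (at x)"
    unfolding chord_defect'_def[abs_def] using x(2) by (auto intro!: derivative_eq_intros)
  show "0 \<le> - 1 / x - 2 * chord_slope K"
    using x chord_slope_neg unfolding defect_inflection_def by (simp add: field_simps)
qed simp

lemma chord_defect_above_tangent:
  assumes "defect_inflection K \<le> x" "defect_inflection K < c"
  shows "chord_defect K c + chord_defect' K c * (x - c) \<le> chord_defect K x"
proof -
  have "chord_defect' K c * (x - c) \<le> chord_defect K x - chord_defect K c"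
    by (rule convex_on_imp_above_tangent[OF chord_defect_convex])
      (use assms defect_inflection_bounds(1) in \<open>auto intro!: has_field_derivative_at_within
        chord_defect_has_derivative simp del: minus_divide_left\<close>)
  then show ?thesis by simp
qed

lemma chord_defect_nonneg_small:
  assumes "0 < x" "x \<le> 1 / (real K + 1)"
  shows "0 \<le> chord_defect K x"
proof -
  define g where "g x = - ln x - chord_intercept K - chord_slope K * x" for x
  have g_eq: "chord_defect K x = x * g x" for x
    unfolding chord_defect_def g_def by (simp add: algebra_simps power2_eq_square)
  have "g (1 / (real K + 1)) \<le> g x"
  proof (rule DERIV_nonpos_imp_nonincreasing[of x "1 / (real K + 1)" g])
    fix y assume y: "x \<le> y" "y \<le> 1 / (real K + 1)"
    then have "0 < y" "real K + 1 \<le> 1 / y" using assms by (auto simp: field_simps)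
    then show "\<exists>D. (g has_real_derivative D) (at y) \<and> D \<le> 0"
      using chord_slope_bounds(2) unfolding g_def
      by (intro exI[of _ "- 1 / y - chord_slope K"]) (auto intro!: derivative_eq_intros)
  qed (use assms in auto)
  moreover have "g (1 / (real K + 1)) = 0"
    using chord_defect_uniform(2) g_eq[of "1 / (real K + 1)"] K_pos by simp
  ultimately show ?thesis using g_eq assms by simp
qed

lemma chord_defect_merge:
  assumes "0 < x" "0 < y" "x + y \<le> 2 * defect_inflection K"
  shows "chord_defect K (x + y) \<le> chord_defect K x + chord_defect K y"
proof -
  have "chord_defect K x + chord_defect K y - chord_defect K (x + y)
      = x * ln ((x + y) / x) + y * ln ((x + y) / y) + 2 * chord_slope K * x * y"
    unfolding chord_defect_def using assms by (simp add: ln_div algebra_simps power2_eq_square)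
  moreover have "y / (x + y) \<le> ln ((x + y) / x)"
    using ln_diff_le[of x "x + y"] assms by (simp add: ln_div diff_divide_distrib)
  then have "x * (y / (x + y)) \<le> x * ln ((x + y) / x)"
    using assms by (intro mult_left_mono) auto
  moreover have "x / (x + y) \<le> ln ((x + y) / y)"
    using ln_diff_le[of y "x + y"] assms by (simp add: ln_div diff_divide_distrib)
  then have "y * (x / (x + y)) \<le> y * ln ((x + y) / y)"
    using assms by (intro mult_left_mono) auto
  moreover have "- chord_slope K \<le> 1 / (x + y)"
    using assms chord_slope_neg unfolding defect_inflection_def by (simp add: field_simps)
  then have "2 * x * y * (- chord_slope K) \<le> 2 * x * y * (1 / (x + y))"
    using assms by (intro mult_left_mono) auto
  moreover have "x * (y / (x + y)) + y * (x / (x + y)) = 2 * x * y * (1 / (x + y))"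
    by (simp add: field_simps)
  moreover have "2 * chord_slope K * x * y = - (2 * x * y * (- chord_slope K))" by simp
  ultimately show ?thesis by linarith
qed

definition split_defect :: "real \<Rightarrow> real" where
  "split_defect e = chord_defect K e + real K * chord_defect K ((1 - e) / real K)"

definition split_defect' :: "real \<Rightarrow> real" where
  "split_defect' e = - ln e + ln ((1 - e) / real K)
     - 2 * chord_slope K * e + 2 * chord_slope K * ((1 - e) / real K)"

lemma split_defect_has_derivative:
  assumes "0 < e" "e < 1"
  shows "(split_defect has_real_derivative split_defect' e) (at e)"
proof -
  have K: "real K > 0" using K_pos by simp
  have "((\<lambda>e. chord_defect K ((1 - e) / real K)) has_real_derivative
      chord_defect' K ((1 - e) / real K) * (- 1 / real K)) (at e)"
    using assms K by (intro DERIV_chain'[OF _ chord_defect_has_derivative])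
      (auto intro!: derivative_eq_intros)
  then have "(split_defect has_real_derivative
      chord_defect' K e + real K * (chord_defect' K ((1 - e) / real K) * (- 1 / real K))) (at e)"
    unfolding split_defect_def[abs_def] using assms
    by (intro DERIV_add DERIV_cmult chord_defect_has_derivative)
  moreover have "chord_defect' K e + real K * (chord_defect' K ((1 - e) / real K) * (- 1 / real K))
      = split_defect' e"
    unfolding chord_defect'_def split_defect'_def using K by (simp add: field_simps)
  ultimately show ?thesis by simp
qed

lemma split_defect'_convex: "convex_on {0<..1/2} split_defect'"
proof (rule f''_ge0_imp_convex)
  have K: "real K > 0" using K_pos by simp
  fix x :: real assume x: "x \<in> {0<..1/2}"
  show "(split_defect' has_real_derivative
      - 1 / x - 1 / (1 - x) - 2 * chord_slope K - 2 * chord_slope K / real K) (at x)"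
    unfolding split_defect'_def[abs_def] using x K
    by (auto intro!: derivative_eq_intros simp: field_simps)
  show "((\<lambda>x. - 1 / x - 1 / (1 - x) - 2 * chord_slope K - 2 * chord_slope K / real K)
      has_real_derivative 1 / x\<^sup>2 - 1 / (1 - x)\<^sup>2) (at x)"
    using x by (auto intro!: derivative_eq_intros simp: field_simps power2_eq_square)
  have "x\<^sup>2 \<le> (1 - x)\<^sup>2" using x by (intro power_mono) auto
  then show "0 \<le> 1 / x\<^sup>2 - 1 / (1 - x)\<^sup>2" using x by (simp add: frac_le)
qed simp

lemma split_defect_uniform: "split_defect (1 / (real K + 1)) = 0" "split_defect' (1 / (real K + 1)) = 0"
proof -
  have "1 - 1 / (real K + 1) = real K / (real K + 1)"
    by (simp add: field_simps)
  then have "(1 - 1 / (real K + 1)) / real K = 1 / (real K + 1)"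
    using K_pos by simp
  then show "split_defect (1 / (real K + 1)) = 0" "split_defect' (1 / (real K + 1)) = 0"
    unfolding split_defect_def split_defect'_def using chord_defect_uniform(2) by simp_all
qed

text \<open>The term \<open>- e ln e\<close> of \<open>split_defect e\<close> is nonnegative, and the rest is continuous at
  \<open>e = 0\<close>, where it vanishes since \<open>chord_defect K (1 / K) = 0\<close>.\<close>

lemma split_defect_near_zero:
  assumes "0 < \<epsilon>"
  obtains \<delta> where "0 < \<delta>" "\<And>e. 0 < e \<Longrightarrow> e < \<delta> \<Longrightarrow> - \<epsilon> < split_defect e"
proof -
  have K: "real K > 0" using K_pos by simp
  define g where "g e = - (1 - e) * ln ((1 - e) / real K) - chord_intercept K
    - chord_slope K * (e\<^sup>2 + (1 - e)\<^sup>2 / real K)" for e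
  have split_eq: "split_defect e = - e * ln e + g e" for e
    unfolding split_defect_def g_def chord_defect_def using K by (simp add: field_simps power2_eq_square)
  have "g 0 = real K * chord_defect K (1 / real K)"
    unfolding g_def chord_defect_def using K by (simp add: field_simps power2_eq_square ln_div)
  then have "g 0 = 0" using chord_defect_uniform(1) by simp
  moreover have "isCont g 0"
    unfolding g_def[abs_def] using K by (auto intro!: continuous_intros)
  ultimately have "\<forall>\<^sub>F e in at 0. - \<epsilon> < g e"
    using assms unfolding isCont_def by (intro order_tendstoD(1)) auto
  then obtain \<delta> where "0 < \<delta>" and \<delta>: "\<And>e. e \<noteq> 0 \<Longrightarrow> dist e 0 < \<delta> \<Longrightarrow> - \<epsilon> < g e"
    unfolding eventually_at by blast
  show ?thesis
  proof (rule that[of "min \<delta> 1"])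
    fix e assume "0 < e" "e < min \<delta> 1"
    then have "- e * ln e \<ge> 0" "- \<epsilon> < g e" using \<delta>[of e] by (auto simp: mult_nonneg_nonpos)
    then show "- \<epsilon> < split_defect e" unfolding split_eq by linarith
  qed (use \<open>0 < \<delta>\<close> in auto)
qed

text \<open>Since \<open>split_defect'\<close> is convex, once it is negative it stays nonpositive up to its zero
  \<open>1 / (K + 1)\<close>; so \<open>split_defect\<close> increases and then decreases on \<open>(0, 1 / (K + 1)]\<close>, and it
  vanishes at both ends.\<close>

lemma split_defect'_nonpos:
  assumes "0 < t" "split_defect' t < 0" "t \<le> s" "s \<le> 1 / (real K + 1)"
  shows "split_defect' s \<le> 0"
proof (cases "s = 1 / (real K + 1)")
  case True
  then show ?thesis using split_defect_uniform(2) by simp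
next
  case False
  define b where "b = 1 / (real K + 1)"
  have s: "s < b" "b \<le> 1 / 2" using assms False K_pos unfolding b_def by (auto simp: field_simps)
  have "convex_on {t..b} split_defect'"
    by (rule convex_on_subset[OF split_defect'_convex]) (use assms s in auto)
  then have "split_defect' s \<le> (split_defect' b - split_defect' t) / (b - t) * (s - t) + split_defect' t"
    by (rule convex_onD_Icc') (use assms s in auto)
  also have "\<dots> = split_defect' t * ((b - s) / (b - t))"
    using split_defect_uniform(2) assms s unfolding b_def[symmetric] by (simp add: field_simps)
  also have "\<dots> \<le> 0" using assms s by (intro mult_nonpos_nonneg) auto
  finally show ?thesis .
qed

lemma split_defect_nonneg:
  assumes z: "0 < z" "z \<le> 1 / (real K + 1)"
  shows "0 \<le> split_defect z"
proof -
  have b: "1 / (real K + 1) \<le> 1 / 2" using K_pos by (simp add: field_simps)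
  have deriv: "(split_defect has_real_derivative split_defect' x) (at x)" if "0 < x" "x \<le> z" for x
    using that z b by (intro split_defect_has_derivative) linarith+
  show ?thesis
  proof (cases "\<exists>t. 0 < t \<and> t \<le> z \<and> split_defect' t < 0")
    case True
    then obtain t where t: "0 < t" "t \<le> z" "split_defect' t < 0" by blast
    have "split_defect (1 / (real K + 1)) \<le> split_defect z"
    proof (rule DERIV_nonpos_imp_nonincreasing[of z "1 / (real K + 1)" split_defect])
      fix x assume x: "z \<le> x" "x \<le> 1 / (real K + 1)"
      show "\<exists>y. (split_defect has_real_derivative y) (at x) \<and> y \<le> 0"
      proof (intro exI conjI)
        show "(split_defect has_real_derivative split_defect' x) (at x)"
          using x z b by (intro split_defect_has_derivative) linarith+
        show "split_defect' x \<le> 0"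
          by (rule split_defect'_nonpos[OF t(1,3)]) (use t x in linarith)+
      qed
    qed (use z in auto)
    then show ?thesis using split_defect_uniform(1) by simp
  next
    case False
    then have nonneg: "0 \<le> split_defect' x" if "0 < x" "x \<le> z" for x
      using that by (meson not_less)
    have mono: "split_defect t \<le> split_defect z" if t: "0 < t" "t \<le> z" for t
    proof (rule DERIV_nonneg_imp_nondecreasing[of t z split_defect])
      fix x assume "t \<le> x" "x \<le> z"
      with t show "\<exists>y. (split_defect has_real_derivative y) (at x) \<and> 0 \<le> y"
        using deriv nonneg by (meson order_less_le_trans)
    qed (use t in simp)
    show ?thesis
    proof (rule ccontr)
      assume "\<not> 0 \<le> split_defect z"
      then obtain \<delta> where "0 < \<delta>" and \<delta>: "\<And>e. 0 < e \<Longrightarrow> e < \<delta> \<Longrightarrow> split_defect z < split_defect e"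
        using split_defect_near_zero[of "- split_defect z"] by auto
      then have "split_defect z < split_defect (min z (\<delta> / 2))" using z by auto
      moreover have "split_defect (min z (\<delta> / 2)) \<le> split_defect z"
        using mono \<open>0 < \<delta>\<close> z by auto
      ultimately show False by simp
    qed
  qed
qed

lemma sum_chord_defect_above_tangent:
  assumes "\<forall>y\<in>#R. defect_inflection K \<le> y" "defect_inflection K < c"
  shows "real (size R) * chord_defect K c + chord_defect' K c * (sum_mset R - real (size R) * c)
    \<le> (\<Sum>y\<in>#R. chord_defect K y)"
proof -
  have "(\<Sum>y\<in>#R. chord_defect K c + chord_defect' K c * (y - c)) \<le> (\<Sum>y\<in>#R. chord_defect K y)"
    using assms chord_defect_above_tangent by (intro sum_mset_mono) auto
  moreover have "(\<Sum>y\<in>#R. chord_defect K c + chord_defect' K c * (y - c))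
      = real (size R) * chord_defect K c + chord_defect' K c * (sum_mset R - real (size R) * c)"
    by (induction R) (auto simp: algebra_simps)
  ultimately show ?thesis by simp
qed

lemma sum_chord_defect_nonneg_few:
  assumes "\<forall>y\<in>#R. defect_inflection K \<le> y" "real (size R) \<le> real K * sum_mset R"
  shows "0 \<le> (\<Sum>y\<in>#R. chord_defect K y)"
proof -
  have K: "real K > 0" using K_pos by simp
  have "defect_inflection K < 1 / real K"
    using defect_inflection_bounds(2) K by (smt (verit) frac_le)
  then have "real (size R) * chord_defect K (1 / real K)
      + chord_defect' K (1 / real K) * (sum_mset R - real (size R) * (1 / real K))
    \<le> (\<Sum>y\<in>#R. chord_defect K y)"
    using assms(1) by (rule sum_chord_defect_above_tangent[rotated])
  moreover have "0 \<le> sum_mset R - real (size R) * (1 / real K)"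
    using assms(2) K by (simp add: field_simps)
  then have "0 \<le> chord_defect' K (1 / real K) * (sum_mset R - real (size R) * (1 / real K))"
    using chord_defect'_uniform(1) by simp
  ultimately show ?thesis using chord_defect_uniform(1) by simp
qed

lemma sum_chord_defect_nonneg_many:
  assumes "\<forall>y\<in>#R. defect_inflection K \<le> y" "(real K + 1) * sum_mset R \<le> real (size R)"
  shows "0 \<le> (\<Sum>y\<in>#R. chord_defect K y)"
proof -
  have "real (size R) * chord_defect K (1 / (real K + 1))
      + chord_defect' K (1 / (real K + 1)) * (sum_mset R - real (size R) * (1 / (real K + 1)))
    \<le> (\<Sum>y\<in>#R. chord_defect K y)"
    using assms(1) defect_inflection_bounds(2) by (rule sum_chord_defect_above_tangent)
  moreover have "sum_mset R - real (size R) * (1 / (real K + 1)) \<le> 0"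
    using assms(2) by (simp add: field_simps)
  then have "0 \<le> chord_defect' K (1 / (real K + 1)) * (sum_mset R - real (size R) * (1 / (real K + 1)))"
    using chord_defect'_uniform(2) by (simp add: mult_nonpos_nonpos)
  ultimately show ?thesis using chord_defect_uniform(2) by simp
qed

lemma sum_chord_defect_nonneg_one_small:
  assumes e: "0 < e" "e < defect_inflection K"
    and R: "\<forall>y\<in>#R. defect_inflection K \<le> y" "sum_mset R = 1 - e"
  shows "0 \<le> chord_defect K e + (\<Sum>y\<in>#R. chord_defect K y)"
proof -
  have K: "real K > 0" using K_pos by simp
  have e_small: "e < 1 / (real K + 1)" using e defect_inflection_bounds(2) by simp
  then have e_defect: "0 \<le> chord_defect K e" using e by (intro chord_defect_nonneg_small) auto
  consider "size R < K" | "K < size R" | "size R = K" by linarith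
  then show ?thesis
  proof cases
    case 1
    have "real K * e < 1" using e_small e K by (simp add: field_simps)
    moreover have "real (size R) + 1 \<le> real K" using 1 by (simp add: nat_less_real_le)
    ultimately have "real (size R) \<le> real K * sum_mset R"
      unfolding R(2) by (simp add: right_diff_distrib)
    then show ?thesis using e_defect sum_chord_defect_nonneg_few[OF R(1)] by simp
  next
    case 2
    have "(real K + 1) * sum_mset R \<le> (real K + 1) * 1"
      by (rule mult_left_mono) (use R(2) e in auto)
    also have "\<dots> \<le> real (size R)" using 2 by (simp add: nat_less_real_le)
    finally have "(real K + 1) * sum_mset R \<le> real (size R)" .
    then show ?thesis using e_defect sum_chord_defect_nonneg_many[OF R(1)] by simp
  next
    case 3
    define m where "m = (1 - e) / real K"
    have "defect_inflection K * (real K + 1) < 1"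
      using defect_inflection_bounds(2) by (simp add: field_simps)
    then have "defect_inflection K < m"
      unfolding m_def using e K by (simp add: field_simps)
    then have "real K * chord_defect K m + chord_defect' K m * (1 - e - real K * m)
        \<le> (\<Sum>y\<in>#R. chord_defect K y)"
      using sum_chord_defect_above_tangent[OF R(1)] 3 R(2) by simp
    moreover have "1 - e - real K * m = 0" unfolding m_def using K by simp
    ultimately have "real K * chord_defect K m \<le> (\<Sum>y\<in>#R. chord_defect K y)" by simp
    moreover have "0 \<le> chord_defect K e + real K * chord_defect K m"
      using split_defect_nonneg[of e] e e_small unfolding split_defect_def m_def by simp
    ultimately show ?thesis by simp
  qed
qed

text \<open>Two atoms whose sum is at most twice the inflection point can be merged without
  increasing the defect; afterwards at most one atom lies below the inflection point, and
  there the defect is controlled by tangents at \<open>1 / K\<close>, \<open>1 / (K + 1)\<close> or the mean.\<close>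

lemma sum_chord_defect_nonneg:
  assumes "\<forall>x\<in>#Q. 0 < x" "sum_mset Q = 1"
  shows "0 \<le> (\<Sum>x\<in>#Q. chord_defect K x)"
  using assms
proof (induction "size Q" arbitrary: Q rule: less_induct)
  case less
  show ?case
  proof (cases "\<exists>x y R. Q = add_mset x (add_mset y R) \<and> x + y \<le> 2 * defect_inflection K")
    case True
    then obtain x y R where Q: "Q = add_mset x (add_mset y R)"
      and xy: "x + y \<le> 2 * defect_inflection K" by blast
    have "0 \<le> (\<Sum>x\<in>#add_mset (x + y) R. chord_defect K x)"
      using less Q by (intro less.hyps) (auto simp: algebra_simps)
    moreover have "chord_defect K (x + y) \<le> chord_defect K x + chord_defect K y"
      using chord_defect_merge xy less.prems Q by auto
    ultimately show ?thesis using Q by simp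
  next
    case no_merge: False
    show ?thesis
    proof (cases "\<forall>x\<in>#Q. defect_inflection K \<le> x")
      case all_large: True
      show ?thesis
      proof (cases "size Q \<le> K")
        case True
        then show ?thesis using all_large less.prems by (intro sum_chord_defect_nonneg_few) auto
      next
        case False
        then show ?thesis using all_large less.prems by (intro sum_chord_defect_nonneg_many) auto
      qed
    next
      case False
      then obtain e where e: "e \<in># Q" "e < defect_inflection K" by (auto simp: not_le)
      define R where "R = Q - {#e#}"
      have Q: "Q = add_mset e R" unfolding R_def using e by simp
      have "defect_inflection K \<le> y" if "y \<in># R" for y
      proof (rule ccontr)
        assume "\<not> defect_inflection K \<le> y"
        then have "e + y \<le> 2 * defect_inflection K" using e by simp
        moreover have "Q = add_mset e (add_mset y (R - {#y#}))" using Q that by simp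
        ultimately show False using no_merge by blast
      qed
      then have "0 \<le> chord_defect K e + (\<Sum>y\<in>#R. chord_defect K y)"
        using e less.prems Q by (intro sum_chord_defect_nonneg_one_small) auto
      then show ?thesis using Q by simp
    qed
  qed
qed

lemma shannon_entropy_ge_chord:
  assumes nonneg: "\<forall>i<d. 0 \<le> p i" and sum_1: "(\<Sum>i<d. p i) = 1"
  shows "(chord_intercept K + chord_slope K * (\<Sum>i<d. (p i)\<^sup>2)) / ln 2 \<le> shannon_entropy d p"
proof -
  define S where "S = {i \<in> {..<d}. p i \<noteq> 0}"
  have sum_S: "(\<Sum>i\<in>S. f (p i)) = (\<Sum>i<d. f (p i))" if "f 0 = 0" for f :: "real \<Rightarrow> real"
    unfolding S_def sum.inter_filter[OF finite_lessThan] using that by (intro sum.cong) auto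
  have "0 \<le> (\<Sum>x\<in>#image_mset p (mset_set S). chord_defect K x)"
    using nonneg sum_1 sum_S[of "\<lambda>x. x"]
    by (intro sum_chord_defect_nonneg) (auto simp: S_def less_le sum_unfold_sum_mset)
  also have "\<dots> = (\<Sum>i\<in>S. chord_defect K (p i))"
    by (simp add: sum_unfold_sum_mset image_mset.compositionality comp_def)
  also have "\<dots> = (\<Sum>i<d. chord_defect K (p i))"
    by (rule sum_S) (simp add: chord_defect_def)
  also have "\<dots> = (\<Sum>i<d. - p i * ln (p i)) - chord_intercept K - chord_slope K * (\<Sum>i<d. (p i)\<^sup>2)"
    unfolding chord_defect_def using sum_1 by (simp add: sum_subtractf flip: sum_distrib_left)
  finally have "chord_intercept K + chord_slope K * (\<Sum>i<d. (p i)\<^sup>2) \<le> (\<Sum>i<d. - p i * ln (p i))"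
    by simp
  moreover have "shannon_entropy d p = (\<Sum>i<d. - p i * ln (p i)) / ln 2"
    unfolding shannon_entropy_def log_def
    by (simp add: sum_divide_distrib sum_negf[symmetric] if_distrib cong: if_cong) (intro sum.cong; simp)
  ultimately show ?thesis by (simp add: divide_right_mono)
qed

lemma sum_shannon_entropy_ge_chord:
  assumes "\<forall>m<M. \<forall>i<d. 0 \<le> p m i" "\<forall>m<M. (\<Sum>i<d. p m i) = 1"
    and "(\<Sum>m<M. \<Sum>i<d. (p m i)\<^sup>2) \<le> s"
  shows "(real M * chord_intercept K + chord_slope K * s) / ln 2 \<le> (\<Sum>m<M. shannon_entropy d (p m))"
proof -
  have "(real M * chord_intercept K + chord_slope K * s) / ln 2
      \<le> (real M * chord_intercept K + chord_slope K * (\<Sum>m<M. \<Sum>i<d. (p m i)\<^sup>2)) / ln 2"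
    using assms(3) chord_slope_neg by (intro divide_right_mono) (auto simp: mult_left_mono_neg)
  also have "\<dots> = (\<Sum>m<M. (chord_intercept K + chord_slope K * (\<Sum>i<d. (p m i)\<^sup>2)) / ln 2)"
    by (simp add: sum_divide_distrib[symmetric] sum.distrib sum_distrib_left)
  also have "\<dots> \<le> (\<Sum>m<M. shannon_entropy d (p m))"
    using assms(1,2) by (intro sum_mono shannon_entropy_ge_chord) auto
  finally show ?thesis .
qed

lemma chord_bound_closed_forms:
  assumes "real M = t * s"
  shows "(real M * chord_intercept K + chord_slope K * s) / ln 2
      = ((t - real K) * (real K + 1) * log 2 (real K + 1) + (1 - (t - real K)) * real K * log 2 (real K)) * s"
    and "(real M * chord_intercept K + chord_slope K * s) / ln 2
      = real M * log 2 (real K) + (real K + 1) * (real M - real K * s) * log 2 (1 + 1 / real K)"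
proof -
  have K: "real K > 0" using K_pos by simp
  define l0 l1 where "l0 = ln (real K)" and "l1 = ln (real K + 1)"
  have "1 + 1 / real K = (real K + 1) / real K" using K by (simp add: field_simps)
  then have log_eqs: "log 2 (1 + 1 / real K) = (l1 - l0) / ln 2"
    "log 2 (real K + 1) = l1 / ln 2" "log 2 (real K) = l0 / ln 2"
    using K unfolding l0_def l1_def log_def by (simp_all add: ln_div)
  show "(real M * chord_intercept K + chord_slope K * s) / ln 2
      = ((t - real K) * (real K + 1) * log 2 (real K + 1) + (1 - (t - real K)) * real K * log 2 (real K)) * s"
    "(real M * chord_intercept K + chord_slope K * s) / ln 2
      = real M * log 2 (real K) + (real K + 1) * (real M - real K * s) * log 2 (1 + 1 / real K)"
    unfolding assms log_eqs chord_intercept_def chord_slope_def l0_def[symmetric] l1_def[symmetric]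
    by (simp_all add: field_simps)
qed

end

section \<open>Collision probabilities of mutually unbiased bases\<close>

text \<open>The matrix with columns \<open>b i\<close> has the adjoint as left inverse, hence also as right inverse.\<close>

lemma orthonormal_basis_complete:
  assumes "orthonormal_basis d b" "k < d" "l < d"
  shows "(\<Sum>i<d. b i k * cnj (b i l)) = (if k = l then 1 else 0)"
proof -
  define U :: "complex mat" where "U = mat d d (\<lambda>(k, i). b i k)"
  define V :: "complex mat" where "V = mat d d (\<lambda>(i, k). cnj (b i k))"
  have U: "U \<in> carrier_mat d d" and V: "V \<in> carrier_mat d d" unfolding U_def V_def by auto
  have "V * U = 1\<^sub>m d"
  proof (rule eq_matI)
    fix i j assume ij: "i < dim_row (1\<^sub>m d)" "j < dim_col (1\<^sub>m d)"
    have "(V * U) $$ (i, j) = cinner d (b i) (b j)"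
      using ij U V unfolding U_def V_def cinner_def
      by (simp add: index_mult_mat scalar_prod_def lessThan_atLeast0)
    then show "(V * U) $$ (i, j) = 1\<^sub>m d $$ (i, j)"
      using assms(1) ij unfolding orthonormal_basis_def by auto
  qed (use U V in auto)
  then have "U * V = 1\<^sub>m d" using mat_mult_left_right_inverse[OF V U] by simp
  moreover have "(U * V) $$ (k, l) = (\<Sum>i<d. b i k * cnj (b i l))"
    using assms U V unfolding U_def V_def
    by (simp add: index_mult_mat scalar_prod_def lessThan_atLeast0)
  ultimately show ?thesis using assms by simp
qed

lemma trace_in_orthonormal_basis:
  assumes "orthonormal_basis d b"
  shows "(\<Sum>i<d. cinner d (b i) (op_apply d A (b i))) = (\<Sum>k<d. A k k)"
proof -
  have "(\<Sum>i<d. cinner d (b i) (op_apply d A (b i)))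
      = (\<Sum>k<d. \<Sum>l<d. A k l * (\<Sum>i<d. b i l * cnj (b i k)))"
    unfolding cinner_def op_apply_def sum_distrib_left
    by (subst sum.swap, rule sum.cong[OF refl], subst sum.swap) (simp add: algebra_simps)
  also have "\<dots> = (\<Sum>k<d. \<Sum>l<d. if l = k then A k k else 0)"
    using orthonormal_basis_complete[OF assms] by (intro sum.cong refl) auto
  also have "\<dots> = (\<Sum>k<d. A k k)" by simp
  finally show ?thesis .
qed

definition hs_inner :: "nat \<Rightarrow> (nat \<Rightarrow> nat \<Rightarrow> complex) \<Rightarrow> (nat \<Rightarrow> nat \<Rightarrow> complex) \<Rightarrow> real" where
  "hs_inner d A C = Re (\<Sum>k<d. \<Sum>l<d. cnj (A k l) * C k l)"

definition id_op :: "nat \<Rightarrow> nat \<Rightarrow> complex" where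
  "id_op k l = (if k = l then 1 else 0)"

definition proj :: "(nat \<Rightarrow> complex) \<Rightarrow> nat \<Rightarrow> nat \<Rightarrow> complex" where
  "proj b k l = b k * cnj (b l)"

definition centered :: "nat \<Rightarrow> (nat \<Rightarrow> nat \<Rightarrow> complex) \<Rightarrow> nat \<Rightarrow> nat \<Rightarrow> complex" where
  "centered d A k l = A k l - complex_of_real (1 / real d) * id_op k l"

lemma hs_inner_commute: "hs_inner d A C = hs_inner d C A"
proof -
  have "(\<Sum>k<d. \<Sum>l<d. cnj (C k l) * A k l) = cnj (\<Sum>k<d. \<Sum>l<d. cnj (A k l) * C k l)"
    by (simp add: mult.commute)
  then show ?thesis unfolding hs_inner_def by simp
qed

lemma hs_inner_diff_left: "hs_inner d (\<lambda>k l. A k l - B k l) C = hs_inner d A C - hs_inner d B C"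
  unfolding hs_inner_def by (simp add: algebra_simps sum_subtractf)

lemma hs_inner_diff_right: "hs_inner d A (\<lambda>k l. B k l - C k l) = hs_inner d A B - hs_inner d A C"
  using hs_inner_diff_left hs_inner_commute by metis

lemma hs_inner_scale_left:
  "hs_inner d (\<lambda>k l. complex_of_real r * A k l) C = r * hs_inner d A C"
proof -
  have "(\<Sum>k<d. \<Sum>l<d. cnj (complex_of_real r * A k l) * C k l)
      = complex_of_real r * (\<Sum>k<d. \<Sum>l<d. cnj (A k l) * C k l)"
    by (simp add: sum_distrib_left mult_ac)
  then show ?thesis unfolding hs_inner_def by simp
qed

lemma hs_inner_sum_left:
  "finite J \<Longrightarrow> hs_inner d (\<lambda>k l. \<Sum>j\<in>J. F j k l) C = (\<Sum>j\<in>J. hs_inner d (F j) C)"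
proof -
  assume J: "finite J"
  have "(\<Sum>k<d. \<Sum>l<d. cnj (\<Sum>j\<in>J. F j k l) * C k l)
      = (\<Sum>k<d. \<Sum>l<d. \<Sum>j\<in>J. cnj (F j k l) * C k l)"
    by (simp add: sum_distrib_right)
  also have "\<dots> = (\<Sum>k<d. \<Sum>j\<in>J. \<Sum>l<d. cnj (F j k l) * C k l)"
    by (rule sum.cong[OF refl], rule sum.swap)
  also have "\<dots> = (\<Sum>j\<in>J. \<Sum>k<d. \<Sum>l<d. cnj (F j k l) * C k l)"
    by (rule sum.swap)
  finally show ?thesis unfolding hs_inner_def by (simp add: Re_sum)
qed

lemma hs_inner_self_nonneg: "0 \<le> hs_inner d A A"
proof -
  have "(\<Sum>k<d. \<Sum>l<d. cnj (A k l) * A k l) = complex_of_real (\<Sum>k<d. \<Sum>l<d. (cmod (A k l))\<^sup>2)"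
    by (simp add: complex_norm_square mult.commute del: of_real_power)
  then show ?thesis unfolding hs_inner_def by (simp add: sum_nonneg)
qed

lemma hs_inner_proj_left: "hs_inner d (proj b) A = Re (cinner d b (op_apply d A b))"
  unfolding hs_inner_def proj_def cinner_def op_apply_def by (simp add: sum_distrib_left mult_ac)

lemma hs_inner_proj_proj: "hs_inner d (proj b) (proj c) = (cmod (cinner d b c))\<^sup>2"
proof -
  have "(\<Sum>k<d. \<Sum>l<d. cnj (proj b k l) * proj c k l) = cinner d b c * cnj (cinner d b c)"
    unfolding proj_def cinner_def
    by (simp add: sum_product mult_ac) (subst sum.swap, simp add: mult_ac)
  moreover have "Re (cinner d b c * cnj (cinner d b c)) = (cmod (cinner d b c))\<^sup>2"
    by (metis Re_complex_of_real complex_norm_square of_real_power)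
  ultimately show ?thesis unfolding hs_inner_def by simp
qed

lemma hs_inner_id_left: "hs_inner d id_op A = Re (\<Sum>k<d. A k k)"
proof -
  have "(\<Sum>l<d. cnj (id_op k l) * A k l) = A k k" if "k < d" for k
  proof -
    have "(\<Sum>l<d. cnj (id_op k l) * A k l) = (\<Sum>l<d. if k = l then A k l else 0)"
      by (rule sum.cong) (auto simp: id_op_def)
    then show ?thesis using that by simp
  qed
  then show ?thesis unfolding hs_inner_def by simp
qed

lemma hs_inner_id_id: "hs_inner d id_op id_op = real d"
  unfolding hs_inner_id_left id_op_def by simp

lemma hs_inner_centered:
  assumes "0 < d"
  shows "hs_inner d (centered d A) (centered d C)
    = hs_inner d A C - hs_inner d A id_op / real d - hs_inner d id_op C / real d + 1 / real d"
proof -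
  have left: "hs_inner d (centered d A) Z = hs_inner d A Z - hs_inner d id_op Z / real d" for A Z
    unfolding centered_def[abs_def] hs_inner_diff_left hs_inner_scale_left by simp
  have right: "hs_inner d Z (centered d C) = hs_inner d Z C - hs_inner d Z id_op / real d" for Z C
    using left[of C Z] hs_inner_commute[of d Z "centered d C"] hs_inner_commute[of d C Z]
      hs_inner_commute[of d id_op Z] by simp
  show ?thesis
    unfolding left right hs_inner_id_id using assms by (simp add: field_simps)
qed

lemma hs_inner_proj_id: "hs_inner d (proj b) id_op = Re (cinner d b b)"
  unfolding hs_inner_def proj_def cinner_def id_op_def by (simp add: if_distrib cong: if_cong)

lemma hs_inner_id_proj: "hs_inner d id_op (proj b) = Re (cinner d b b)"
  using hs_inner_commute[of d id_op "proj b"] hs_inner_proj_id by simp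

lemma hs_inner_bessel:
  assumes "finite J"
    and EX: "\<And>j. j \<in> J \<Longrightarrow> hs_inner d (E j) X = c j"
    and EY: "\<And>j. j \<in> J \<Longrightarrow> hs_inner d (E j) (\<lambda>k l. \<Sum>i\<in>J. complex_of_real (c i) * E i k l) = c j"
  shows "(\<Sum>j\<in>J. (c j)\<^sup>2) \<le> hs_inner d X X"
proof -
  define Y where "Y k l = (\<Sum>i\<in>J. complex_of_real (c i) * E i k l)" for k l
  have Y: "hs_inner d Y Z = (\<Sum>j\<in>J. c j * hs_inner d (E j) Z)" for Z
    unfolding Y_def using assms(1) by (simp add: hs_inner_sum_left hs_inner_scale_left)
  have YX: "hs_inner d Y X = (\<Sum>j\<in>J. (c j)\<^sup>2)"
    unfolding Y using EX by (simp add: power2_eq_square)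
  have YY: "hs_inner d Y Y = (\<Sum>j\<in>J. (c j)\<^sup>2)"
    unfolding Y using EY by (simp add: power2_eq_square Y_def[abs_def])
  have "0 \<le> hs_inner d (\<lambda>k l. X k l - Y k l) (\<lambda>k l. X k l - Y k l)"
    by (rule hs_inner_self_nonneg)
  also have "\<dots> = hs_inner d X X - 2 * hs_inner d Y X + hs_inner d Y Y"
    unfolding hs_inner_diff_left hs_inner_diff_right
    using hs_inner_commute[of d X Y] by simp
  finally show ?thesis unfolding YX YY by simp
qed

lemma cinner_op_apply_two_point:
  assumes "k < d" "l < d"
  shows "cinner d (\<lambda>j. (if j = k then A else 0) + (if j = l then C else 0))
           (op_apply d \<rho> (\<lambda>j. (if j = k then A else 0) + (if j = l then C else 0)))
       = cnj A * (\<rho> k k * A + \<rho> k l * C) + cnj C * (\<rho> l k * A + \<rho> l l * C)"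
proof -
  define v where "v = (\<lambda>j::nat. (if j = k then A else 0) + (if j = l then C else 0))"
  have "op_apply d \<rho> v = (\<lambda>j. \<rho> j k * A + \<rho> j l * C)"
    unfolding op_apply_def v_def using assms
    by (simp add: distrib_left sum.distrib if_distrib[of "\<lambda>x. _ * x"] cong: if_cong)
  then show ?thesis
    unfolding cinner_def v_def[symmetric] unfolding v_def using assms
    by (simp add: distrib_right sum.distrib if_distrib[of cnj] if_distrib[of "\<lambda>x. x * _"] cong: if_cong)
qed

lemma density_operator_trace: "density_operator d \<rho> \<Longrightarrow> (\<Sum>k<d. \<rho> k k) = 1"
  unfolding density_operator_def by blast

lemma density_operator_nonneg: "density_operator d \<rho> \<Longrightarrow> 0 \<le> Re (cinner d v (op_apply d \<rho> v))"
  unfolding density_operator_def by blast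

lemma density_operator_hermitian: "density_operator d \<rho> \<Longrightarrow> k < d \<Longrightarrow> l < d \<Longrightarrow> \<rho> l k = cnj (\<rho> k l)"
  unfolding density_operator_def by blast

lemma nonneg_quadratic_imp_discriminant:
  fixes a b c :: real
  assumes "0 \<le> a" "\<And>t. 0 \<le> a * t\<^sup>2 - 2 * b * t + c"
  shows "b\<^sup>2 \<le> a * c"
proof (cases "a = 0")
  case True
  have "b = 0"
  proof (rule ccontr)
    assume "b \<noteq> 0"
    then have "2 * b * ((c + 1) / (2 * b)) = c + 1" by simp
    then show False using assms(2)[of "(c + 1) / (2 * b)"] True by simp
  qed
  then show ?thesis using True by simp
next
  case False
  then have "0 < a" using assms(1) by simp
  moreover have "0 \<le> a * (b / a)\<^sup>2 - 2 * b * (b / a) + c" by (rule assms(2))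
  ultimately show ?thesis by (simp add: field_simps power2_eq_square)
qed

lemma density_operator_diag:
  assumes "density_operator d \<rho>" "k < d"
  shows "0 \<le> Re (\<rho> k k)" "Im (\<rho> k k) = 0"
proof -
  have "0 \<le> Re (cinner d (\<lambda>j. (if j = k then 1 else 0) + (if j = k then 0 else 0))
           (op_apply d \<rho> (\<lambda>j. (if j = k then 1 else 0) + (if j = k then 0 else 0))))"
    by (rule density_operator_nonneg[OF assms(1)])
  then show "0 \<le> Re (\<rho> k k)" using cinner_op_apply_two_point[OF assms(2) assms(2), of 1 0 \<rho>] by simp
  have "\<rho> k k = cnj (\<rho> k k)" using density_operator_hermitian[OF assms(1,2,2)] .
  then show "Im (\<rho> k k) = 0" by (metis complex_cnj_cancel_iff complex_is_Real_iff Reals_cnj_iff)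
qed

text \<open>Positivity on the vectors \<open>t e\<^sub>k - cnj \<rho>\<^sub>k\<^sub>l e\<^sub>l\<close> gives a nonnegative quadratic in \<open>t\<close>.\<close>

lemma density_operator_offdiag:
  assumes "density_operator d \<rho>" "k < d" "l < d"
  shows "(cmod (\<rho> k l))\<^sup>2 \<le> Re (\<rho> k k) * Re (\<rho> l l)"
proof -
  let ?r = "\<rho> k l"
  have herm: "\<rho> l k = cnj ?r" using density_operator_hermitian[OF assms] .
  have diag: "\<rho> k k = complex_of_real (Re (\<rho> k k))" "\<rho> l l = complex_of_real (Re (\<rho> l l))"
    using density_operator_diag(2)[OF assms(1)] assms(2,3) by (simp_all add: complex_eq_iff)
  have cm: "cmod ?r * cmod ?r = Re ?r * Re ?r + Im ?r * Im ?r"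
    using cmod_power2[of ?r] by (simp add: power2_eq_square)
  have "0 \<le> Re (\<rho> k k) * t\<^sup>2 - 2 * (cmod ?r)\<^sup>2 * t + (cmod ?r)\<^sup>2 * Re (\<rho> l l)" for t
  proof -
    have "0 \<le> Re (cinner d (\<lambda>j. (if j = k then complex_of_real t else 0) + (if j = l then - cnj ?r else 0))
           (op_apply d \<rho> (\<lambda>j. (if j = k then complex_of_real t else 0) + (if j = l then - cnj ?r else 0))))"
      by (rule density_operator_nonneg[OF assms(1)])
    also have "\<dots> = Re (\<rho> k k) * t\<^sup>2 - 2 * (cmod ?r)\<^sup>2 * t + (cmod ?r)\<^sup>2 * Re (\<rho> l l)"
      unfolding cinner_op_apply_two_point[OF assms(2,3)] herm
      by (subst (1 2) diag) (simp add: algebra_simps power2_eq_square cm)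
    finally show ?thesis .
  qed
  then have "((cmod ?r)\<^sup>2)\<^sup>2 \<le> Re (\<rho> k k) * ((cmod ?r)\<^sup>2 * Re (\<rho> l l))"
    by (intro nonneg_quadratic_imp_discriminant density_operator_diag(1)[OF assms(1,2)])
  then have sq: "(cmod ?r)\<^sup>2 * (cmod ?r)\<^sup>2 \<le> (cmod ?r)\<^sup>2 * (Re (\<rho> k k) * Re (\<rho> l l))"
    by (simp add: power2_eq_square mult_ac)
  show ?thesis
  proof (cases "?r = 0")
    case True
    then show ?thesis using density_operator_diag(1)[OF assms(1)] assms(2,3) by simp
  next
    case False
    then have "0 < (cmod ?r)\<^sup>2" by simp
    with sq show ?thesis by (simp only: mult_le_cancel_left_pos)
  qed
qed

lemma density_operator_hs_inner_self_le_1: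
  assumes "density_operator d \<rho>"
  shows "hs_inner d \<rho> \<rho> \<le> 1"
proof -
  have "hs_inner d \<rho> \<rho> = (\<Sum>k<d. \<Sum>l<d. (cmod (\<rho> k l))\<^sup>2)"
  proof -
    have "(\<Sum>k<d. \<Sum>l<d. cnj (\<rho> k l) * \<rho> k l) = complex_of_real (\<Sum>k<d. \<Sum>l<d. (cmod (\<rho> k l))\<^sup>2)"
      by (simp add: complex_norm_square mult.commute del: of_real_power)
    then show ?thesis unfolding hs_inner_def by simp
  qed
  also have "\<dots> \<le> (\<Sum>k<d. \<Sum>l<d. Re (\<rho> k k) * Re (\<rho> l l))"
    using density_operator_offdiag[OF assms] by (intro sum_mono) auto
  also have "\<dots> = (\<Sum>k<d. Re (\<rho> k k)) * (\<Sum>l<d. Re (\<rho> l l))"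
    by (simp add: sum_product)
  also have "(\<Sum>k<d. Re (\<rho> k k)) = 1"
    using density_operator_trace[OF assms] by (metis Re_sum one_complex.sel)
  finally show ?thesis by simp
qed

lemma sum_probabilities_orthonormal_basis:
  assumes "density_operator d \<rho>" "orthonormal_basis d b"
  shows "(\<Sum>i<d. Re (cinner d (b i) (op_apply d \<rho> (b i)))) = 1"
proof -
  have "(\<Sum>i<d. cinner d (b i) (op_apply d \<rho> (b i))) = 1"
    using trace_in_orthonormal_basis[OF assms(2), of \<rho>] density_operator_trace[OF assms(1)] by simp
  then show ?thesis by (metis Re_sum one_complex.sel)
qed

text \<open>The operators \<open>E\<^sub>i\<^sub>m = |i\<^sub>m\<rangle>\<langle>i\<^sub>m| - I / d\<close> have Gram matrix \<open>\<delta>\<^sub>m\<^sub>n (\<delta>\<^sub>i\<^sub>j - 1 / d)\<close>. As the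
  coefficients \<open>p\<^sub>i\<^sub>m - 1 / d\<close> sum to zero over each basis, their combination of the \<open>E\<^sub>i\<^sub>m\<close>
  has the same inner products with the \<open>E\<^sub>i\<^sub>m\<close> as \<open>\<rho> - I / d\<close>, which is what Bessel's
  inequality needs.\<close>

lemma mub_collision_bound:
  assumes d: "0 < d" and \<rho>: "density_operator d \<rho>" and mub: "mutually_unbiased d M B"
    and p: "\<And>m i. p m i = Re (cinner d (B m i) (op_apply d \<rho> (B m i)))"
  shows "(\<Sum>m<M. \<Sum>i<d. (p m i)\<^sup>2) \<le> (real d + real M - 1) / real d"
proof -
  define J where "J = {..<M} \<times> {..<d}"
  define E where "E = (\<lambda>(m, i). centered d (proj (B m i)))"
  define c where "c = (\<lambda>(m, i). p m i - 1 / real d)"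
  have onb: "orthonormal_basis d (B m)" if "m < M" for m
    using mub that unfolding mutually_unbiased_def by blast
  have unit: "Re (cinner d (B m i) (B m i)) = 1" if "m < M" "i < d" for m i
    using onb that unfolding orthonormal_basis_def by simp
  have trace: "hs_inner d id_op \<rho> = 1" "hs_inner d \<rho> id_op = 1"
    using density_operator_trace[OF \<rho>] hs_inner_commute[of d \<rho> id_op]
    unfolding hs_inner_id_left by simp_all
  have p_sum: "(\<Sum>i<d. p m i) = 1" if "m < M" for m
    using sum_probabilities_orthonormal_basis[OF \<rho> onb[OF that]] p by simp
  have EX: "hs_inner d (E a) (centered d \<rho>) = c a" if "a \<in> J" for a
    using that d unit trace unfolding J_def E_def c_def
    by (auto simp: hs_inner_centered hs_inner_proj_left[where A = \<rho>] hs_inner_proj_id p)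
  have gram: "hs_inner d (E a) (E a') = (if a = a' then 1 else 0) - (if fst a = fst a' then 1 / real d else 0)"
    if "a \<in> J" "a' \<in> J" for a a'
  proof -
    obtain n j m i where a: "a = (n, j)" "a' = (m, i)" "n < M" "j < d" "m < M" "i < d"
      using \<open>a \<in> J\<close> \<open>a' \<in> J\<close> unfolding J_def by auto
    have "(cmod (cinner d (B n j) (B m i)))\<^sup>2 = (if n = m then (if j = i then 1 else 0) else 1 / real d)"
      using mub a unfolding mutually_unbiased_def orthonormal_basis_def by auto
    then show ?thesis
      using a d unit unfolding E_def
      by (auto simp: hs_inner_centered hs_inner_proj_proj hs_inner_proj_id hs_inner_id_proj)
  qed
  have EY: "hs_inner d (E a) (\<lambda>k l. \<Sum>a'\<in>J. complex_of_real (c a') * E a' k l) = c a" if "a \<in> J" for a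
  proof -
    obtain m i where a: "a = (m, i)" "m < M" "i < d" using \<open>a \<in> J\<close> unfolding J_def by auto
    have "hs_inner d (E a) (\<lambda>k l. \<Sum>a'\<in>J. complex_of_real (c a') * E a' k l)
        = (\<Sum>a'\<in>J. c a' * hs_inner d (E a') (E a))"
      unfolding J_def by (subst hs_inner_commute) (simp add: hs_inner_sum_left hs_inner_scale_left)
    also have "\<dots> = (\<Sum>a'\<in>J. (if a' = a then c a' else 0) - (if fst a' = m then c a' / real d else 0))"
      by (rule sum.cong[OF refl]) (use gram that a in \<open>auto simp: right_diff_distrib\<close>)
    also have "\<dots> = c a - (\<Sum>j<d. c (m, j)) / real d"
    proof -
      have "(\<Sum>a'\<in>J. if fst a' = m then c a' / real d else 0) = (\<Sum>j<d. c (m, j)) / real d"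
        unfolding J_def sum.cartesian_product' using a
        by (subst sum.swap) (simp add: sum_divide_distrib)
      moreover have "finite J" unfolding J_def by simp
      ultimately show ?thesis using that unfolding sum_subtractf by simp
    qed
    also have "(\<Sum>j<d. c (m, j)) = 0" using p_sum[OF a(2)] d by (simp add: c_def sum_subtractf)
    finally show ?thesis using that by (simp add: J_def)
  qed
  have "(\<Sum>a\<in>J. (c a)\<^sup>2) \<le> hs_inner d (centered d \<rho>) (centered d \<rho>)"
    using EX EY by (intro hs_inner_bessel[where E = E]) (auto simp: J_def)
  also have "\<dots> \<le> 1 - 1 / real d"
    using d trace density_operator_hs_inner_self_le_1[OF \<rho>] by (simp add: hs_inner_centered)
  also have "(\<Sum>a\<in>J. (c a)\<^sup>2) = (\<Sum>m<M. \<Sum>i<d. (p m i)\<^sup>2) - real M / real d"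
  proof -
    have "(\<Sum>i<d. (p m i - 1 / real d)\<^sup>2)
        = (\<Sum>i<d. (p m i)\<^sup>2) - 2 / real d * (\<Sum>i<d. p m i) + real d * (1 / real d)\<^sup>2" for m
      by (simp add: power2_diff sum.distrib sum_subtractf sum_distrib_left)
    then have "(\<Sum>i<d. (p m i - 1 / real d)\<^sup>2) = (\<Sum>i<d. (p m i)\<^sup>2) - 1 / real d" if "m < M" for m
      using p_sum[OF that] d by (simp add: power2_eq_square)
    then show ?thesis
      unfolding J_def c_def sum.cartesian_product' by (simp add: sum_subtractf)
  qed
  finally have "(\<Sum>m<M. \<Sum>i<d. (p m i)\<^sup>2) - real M / real d \<le> 1 - 1 / real d" .
  moreover have "(real d + real M - 1) / real d = 1 - 1 / real d + real M / real d"
    using d by (simp add: field_simps)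
  ultimately show ?thesis by linarith
qed

lemma one_le_mult_div_add_minus_one:
  assumes "1 \<le> d" "1 \<le> M"
  shows "1 \<le> real M * real d / (real d + real M - 1)"
proof -
  have "0 \<le> (real M - 1) * (real d - 1)" using assms by simp
  then have "real d + real M - 1 \<le> real M * real d" by (simp add: algebra_simps)
  then show ?thesis using assms by simp
qed

theorem proposition2:
  fixes d M K :: nat and \<rho> :: "nat \<Rightarrow> nat \<Rightarrow> complex"
    and B :: "nat \<Rightarrow> nat \<Rightarrow> nat \<Rightarrow> complex"
    and p :: "nat \<Rightarrow> nat \<Rightarrow> real" and a :: real
  assumes "d \<ge> 2" and "M \<ge> 1"
    and "density_operator d \<rho>"
    and "mutually_unbiased d M B"
    and "\<And>m i. p m i = Re (cinner d (B m i) (op_apply d \<rho> (B m i)))"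
    and "K = nat \<lfloor>real M * real d / (real d + real M - 1)\<rfloor>"
    and "a = real M * real d / (real d + real M - 1) - real K"
  shows "(\<Sum>m<M. shannon_entropy d (p m)) \<ge>
           (a * (real K + 1) * log 2 (real K + 1) + (1 - a) * real K * log 2 (real K))
             * (real d + real M - 1) / real d
       \<and> (a * (real K + 1) * log 2 (real K + 1) + (1 - a) * real K * log 2 (real K))
             * (real d + real M - 1) / real d
         = real M * log 2 (real K)
           + (real K + 1) * (real M - real K * (real d + real M - 1) / real d)
             * log 2 (1 + 1 / real K)"
proof -
  note d = assms(1) and \<rho> = assms(3) and mub = assms(4) and p = assms(5)
  define s where "s = (real d + real M - 1) / real d"
  define t where "t = real M * real d / (real d + real M - 1)"
  have "t * s = real M * (real d / real d) * ((real d + real M - 1) / (real d + real M - 1))"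
    unfolding t_def s_def by (simp add: mult_ac)
  then have M: "real M = t * s" using d by simp
  have "1 \<le> t" unfolding t_def using d assms(2) by (intro one_le_mult_div_add_minus_one) auto
  then have K: "K \<ge> 1" using assms(6) unfolding t_def[symmetric] by (simp add: le_nat_floor)
  have "(real M * chord_intercept K + chord_slope K * s) / ln 2 \<le> (\<Sum>m<M. shannon_entropy d (p m))"
  proof (rule sum_shannon_entropy_ge_chord[OF K])
    show "\<forall>m<M. \<forall>i<d. 0 \<le> p m i" using density_operator_nonneg[OF \<rho>] p by simp
    show "\<forall>m<M. (\<Sum>i<d. p m i) = 1"
      using sum_probabilities_orthonormal_basis[OF \<rho>] mub p unfolding mutually_unbiased_def by simp
    show "(\<Sum>m<M. \<Sum>i<d. (p m i)\<^sup>2) \<le> s"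
      unfolding s_def using mub_collision_bound[OF _ \<rho> mub p] d by simp
  qed
  moreover have "a = t - real K" using assms(7) unfolding t_def .
  ultimately show ?thesis
    using chord_bound_closed_forms[OF K M] unfolding s_def by (simp add: times_divide_eq_right)
qed

end
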